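(* Let $N\ge 1$, $1<a_1<\cdots<a_N$, $\mathbf a=(a_1,\dots,a_N)$. If $f\in C^{(k)}(\mathbb{R})$ satisfies $f(x)+f(a_1x)+\cdots+f(a_Nx)=0$ for all $x\in\mathbb{R}$ and $k\ge m(\mathbf{a})$, then $f\equiv 0$. In particular, $f\equiv0$ is the only $C^\infty(\mathbb{R})$ function satisfying this equation for all real $x$.
   Context: With $a_0=1$, $m(\mathbf{a})=\min\{m\in\mathbb{N}: \sum_{k=0}^{N-1}(a_k/a_N)^m<1\}$. *)

theory Defs
  imports "HOL-Analysis.Analysis"
begin

definition Ck :: "nat \<Rightarrow> (real \<Rightarrow> real) \<Rightarrow> bool" where
  "Ck k f \<longleftrightarrow>
     (\<forall>j<k. \<forall>x. ((deriv ^^ j) f has_real_derivative (deriv ^^ (Suc j)) f x) (at x))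
     \<and> continuous_on UNIV ((deriv ^^ k) f)"

text \<open>m(a) = min { m in N : sum_{k=0}^{N-1} (a_k/a_N)^m < 1 }, with a_0 = 1 supplied as a 0.\<close>
definition m_a :: "nat \<Rightarrow> (nat \<Rightarrow> real) \<Rightarrow> nat" where
  "m_a N a = (LEAST m::nat. (\<Sum>k<N. (a k / a N) ^ m) < 1)"

end

theory Submission
  imports Defs
begin

(* Write a 0 = 1, so the equation reads  \<Sum>i\<le>N. f (a i * x) = 0.
   Differentiating j times (j \<le> k) gives  \<Sum>i\<le>N. a i ^ j * D\<^sub>j f (a i * x) = 0,
   where D\<^sub>j is the j-th derivative.  At x = 0 this forces D\<^sub>j f 0 = 0, because all
   a i are positive.  For j = m = m(a), isolating the top term a N ^ m * D\<^sub>m f y shows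
   |D\<^sub>m f y| \<le> \<Sum>i<N. (a i / a N) ^ m * |D\<^sub>m f ((a i / a N) * y)|, a contraction since the
   weights sum to less than 1 and the arguments shrink; a maximum argument on
   [-|y|, |y|] then yields D\<^sub>m f = 0.  Finally, descending from D\<^sub>m f = 0 with all
   D\<^sub>j f 0 = 0, each lower derivative is constant and vanishes at 0, so f = 0.
   The file establishes, in this order: the differentiated equations, the contraction
   lemma, the descent lemma, the facts about the scales a and m(a), and then the C^k
   statement, from which the C^\<infinity> statement follows by taking k = m(a). *)

lemma scaled_sum_equation_deriv:
  fixes f f' :: "real \<Rightarrow> real" and w b :: "'i \<Rightarrow> real"
  assumes der: "\<And>x. (f has_real_derivative f' x) (at x)"
    and eq: "\<And>x. (\<Sum>i\<in>I. w i * f (b i * x)) = 0"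
  shows "(\<Sum>i\<in>I. (w i * b i) * f' (b i * x)) = 0"
proof -
  have "((\<lambda>x. \<Sum>i\<in>I. w i * f (b i * x)) has_real_derivative
          (\<Sum>i\<in>I. w i * (f' (b i * x) * b i))) (at x)"
    by (intro DERIV_sum DERIV_cmult DERIV_chain2[where f = f] der DERIV_cmult_Id)
  moreover have "((\<lambda>x. \<Sum>i\<in>I. w i * f (b i * x)) has_real_derivative 0) (at x)"
    using eq by simp
  ultimately have "(\<Sum>i\<in>I. w i * (f' (b i * x) * b i)) = 0"
    by (rule DERIV_unique)
  then show ?thesis by (simp add: ac_simps)
qed

lemma Ck_has_derivative:
  assumes "Ck k f" and "j < k"
  shows "((deriv ^^ j) f has_real_derivative (deriv ^^ Suc j) f x) (at x)"
  using assms unfolding Ck_def by blast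

lemma Ck_continuous:
  assumes "Ck k f" and "j \<le> k"
  shows "continuous_on UNIV ((deriv ^^ j) f)"
proof (cases "j = k")
  case True
  then show ?thesis using assms(1) unfolding Ck_def by blast
next
  case False
  then have "j < k" using assms(2) by simp
  then have "isCont ((deriv ^^ j) f) x" for x
    using DERIV_isCont[OF Ck_has_derivative[OF assms(1)]] by blast
  then show ?thesis by (simp add: continuous_at_imp_continuous_on)
qed

lemma Ck_scaled_sum_equation:
  fixes f :: "real \<Rightarrow> real" and w b :: "'i \<Rightarrow> real"
  assumes ck: "Ck k f"
    and eq: "\<And>x. (\<Sum>i\<in>I. w i * f (b i * x)) = 0"
    and "j \<le> k"
  shows "(\<Sum>i\<in>I. (w i * b i ^ j) * (deriv ^^ j) f (b i * x)) = 0"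
  using \<open>j \<le> k\<close>
proof (induction j arbitrary: x)
  case 0
  then show ?case using eq by simp
next
  case (Suc j)
  have "(\<Sum>i\<in>I. ((w i * b i ^ j) * b i) * (deriv ^^ Suc j) f (b i * x)) = 0"
    using Suc.prems Suc.IH
    by (intro scaled_sum_equation_deriv[where f = "(deriv ^^ j) f"] Ck_has_derivative[OF ck]) auto
  then show ?case by (simp add: ac_simps)
qed

text \<open>A continuous function dominated by a sub-convex combination (total weight below 1)
  of its values at points closer to the origin vanishes identically: compare with the
  maximum of |g| on the interval [-|y|, |y|].\<close>
lemma contraction_vanishes:
  fixes g :: "real \<Rightarrow> real" and c r :: "'i \<Rightarrow> real"
  assumes cont: "continuous_on UNIV g"
    and c_nonneg: "\<And>i. i \<in> I \<Longrightarrow> 0 \<le> c i"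
    and c_sum: "(\<Sum>i\<in>I. c i) < 1"
    and r_le: "\<And>i. i \<in> I \<Longrightarrow> \<bar>r i\<bar> \<le> 1"
    and bound: "\<And>y. \<bar>g y\<bar> \<le> (\<Sum>i\<in>I. c i * \<bar>g (r i * y)\<bar>)"
  shows "g y = 0"
proof -
  define R where "R = \<bar>y\<bar>"
  have "continuous_on {-R..R} g" using cont continuous_on_subset by blast
  then have "continuous_on {-R..R} (\<lambda>t. \<bar>g t\<bar>)" by (rule continuous_on_rabs)
  moreover have "{-R..R} \<noteq> {}" using R_def by simp
  ultimately obtain y0 where y0: "y0 \<in> {-R..R}"
    and max: "\<And>t. t \<in> {-R..R} \<Longrightarrow> \<bar>g t\<bar> \<le> \<bar>g y0\<bar>"
    using continuous_attains_sup[OF compact_Icc] by blast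
  have inside: "r i * y0 \<in> {-R..R}" if "i \<in> I" for i
  proof -
    have "\<bar>r i * y0\<bar> \<le> 1 * \<bar>y0\<bar>"
      unfolding abs_mult using r_le[OF that] by (intro mult_right_mono) auto
    then show ?thesis using y0 by auto
  qed
  have "\<bar>g y0\<bar> \<le> (\<Sum>i\<in>I. c i * \<bar>g (r i * y0)\<bar>)" by (rule bound)
  also have "\<dots> \<le> (\<Sum>i\<in>I. c i * \<bar>g y0\<bar>)"
    using c_nonneg max inside by (intro sum_mono mult_left_mono) auto
  also have "\<dots> = (\<Sum>i\<in>I. c i) * \<bar>g y0\<bar>" by (simp add: sum_distrib_right)
  finally have "(1 - (\<Sum>i\<in>I. c i)) * \<bar>g y0\<bar> \<le> 0" by (simp add: algebra_simps)
  with c_sum have "\<bar>g y0\<bar> = 0" by (simp add: mult_le_0_iff)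
  moreover have "y \<in> {-R..R}"
    unfolding R_def atLeastAtMost_iff using abs_ge_self[of y] abs_ge_minus_self[of y] by linarith
  ultimately show ?thesis using max[of y] by simp
qed

lemma vanishing_derivatives_imp_zero:
  fixes f :: "real \<Rightarrow> real"
  assumes der: "\<And>j x. j < m \<Longrightarrow> ((deriv ^^ j) f has_real_derivative (deriv ^^ Suc j) f x) (at x)"
    and top: "\<And>x. (deriv ^^ m) f x = 0"
    and at_zero: "\<And>j. j \<le> m \<Longrightarrow> (deriv ^^ j) f 0 = 0"
  shows "f x = 0"
proof -
  have "(deriv ^^ (m - j)) f x = 0" if "j \<le> m" for j x
    using that
  proof (induction j arbitrary: x)
    case 0
    then show ?case using top by simp
  next
    case (Suc j)
    have idx: "m - Suc j < m" "Suc (m - Suc j) = m - j" using Suc.prems by auto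
    have "((deriv ^^ (m - Suc j)) f has_real_derivative 0) (at t)" for t
      using der[OF idx(1), of t] Suc by (simp add: idx(2))
    then have "(deriv ^^ (m - Suc j)) f x = (deriv ^^ (m - Suc j)) f 0"
      using DERIV_isconst_all by blast
    then show ?case using at_zero[of "m - Suc j"] by simp
  qed
  from this[of m] show ?thesis by simp
qed

lemma scales_increasing:
  fixes a :: "nat \<Rightarrow> real"
  assumes "a 0 = 1" and "1 < a 1"
    and "\<And>i. 1 \<le> i \<Longrightarrow> i < N \<Longrightarrow> a i < a (Suc i)"
  shows "j \<le> N \<Longrightarrow> i < j \<Longrightarrow> a i < a j"
proof (induction j arbitrary: i)
  case 0
  then show ?case by simp
next
  case (Suc j)
  have step: "a j < a (Suc j)"
    using assms Suc.prems by (cases "j = 0") auto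
  show ?case
    using Suc.IH[of i] Suc.prems step by (cases "i = j") auto
qed

lemma scales_pos:
  fixes a :: "nat \<Rightarrow> real"
  assumes "a 0 = 1" and "\<And>i j. j \<le> N \<Longrightarrow> i < j \<Longrightarrow> a i < a j"
    and "i \<le> N"
  shows "0 < a i"
proof (cases "i = 0")
  case False
  then have "a 0 < a i" using assms(2,3) by simp
  then show ?thesis using assms(1) by simp
qed (use assms(1) in simp)

text \<open>The set defining m(a) is nonempty, so m(a) belongs to it: since every ratio
  a i / a N with i < N lies in (0, 1), the sum of their m-th powers tends to 0.\<close>
lemma m_a_property:
  fixes a :: "nat \<Rightarrow> real"
  assumes "\<And>i. i < N \<Longrightarrow> 0 < a i \<and> a i < a N"
  shows "(\<Sum>i<N. (a i / a N) ^ m_a N a) < 1"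
proof -
  have "(\<lambda>m. \<Sum>i<N. (a i / a N) ^ m) \<longlonglongrightarrow> (\<Sum>i<N. 0)"
  proof (rule tendsto_sum)
    fix i assume "i \<in> {..<N}"
    then have "norm (a i / a N) < 1" using assms[of i] by simp
    then show "(\<lambda>m. (a i / a N) ^ m) \<longlonglongrightarrow> 0" by (rule LIMSEQ_power_zero)
  qed
  then have "eventually (\<lambda>m. (\<Sum>i<N. (a i / a N) ^ m) < 1) sequentially"
    by (intro order_tendstoD(2)) auto
  then have "\<exists>m. (\<Sum>i<N. (a i / a N) ^ m) < 1"
    by (auto simp: eventually_sequentially)
  then show ?thesis unfolding m_a_def by (rule LeastI_ex)
qed

lemma isolate_top_scale:
  fixes g :: "real \<Rightarrow> real" and b :: "nat \<Rightarrow> real"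
  assumes pos: "\<And>i. i \<le> N \<Longrightarrow> 0 < b i"
    and eq: "\<And>x. (\<Sum>i\<le>N. b i ^ m * g (b i * x)) = 0"
  shows "\<bar>g y\<bar> \<le> (\<Sum>i<N. (b i / b N) ^ m * \<bar>g ((b i / b N) * y)\<bar>)"
proof -
  have bN: "0 < b N" using pos by simp
  have "(\<Sum>i<N. b i ^ m * g (b i * (y / b N))) + b N ^ m * g y = 0"
    using eq[of "y / b N"] bN by (simp add: lessThan_Suc_atMost[symmetric])
  then have "g y = - (\<Sum>i<N. b i ^ m * g (b i * (y / b N))) / b N ^ m"
    using bN by (simp add: eq_divide_eq add_eq_0_iff2 mult.commute)
  also have "\<dots> = - (\<Sum>i<N. (b i / b N) ^ m * g ((b i / b N) * y))"
    by (simp add: sum_divide_distrib power_divide)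
  finally have "g y = - (\<Sum>i<N. (b i / b N) ^ m * g ((b i / b N) * y))" .
  then have "\<bar>g y\<bar> \<le> (\<Sum>i<N. \<bar>(b i / b N) ^ m * g ((b i / b N) * y)\<bar>)"
    by (simp only: abs_minus_cancel sum_abs)
  also have "\<dots> = (\<Sum>i<N. (b i / b N) ^ m * \<bar>g ((b i / b N) * y)\<bar>)"
  proof (rule sum.cong)
    fix i assume "i \<in> {..<N}"
    then have "0 \<le> (b i / b N) ^ m" using pos[of i] bN by simp
    then show "\<bar>(b i / b N) ^ m * g ((b i / b N) * y)\<bar>
        = (b i / b N) ^ m * \<bar>g ((b i / b N) * y)\<bar>" by (simp add: abs_mult)
  qed simp
  finally show ?thesis .
qed

text \<open>The finite-smoothness statement: a C^k solution with k \<ge> m(a) vanishes.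
  Only 1 = a 0 < a 1 < ... < a N is used; the case N = 0 is included.\<close>
theorem Ck_solution_vanishes:
  fixes N :: nat and a :: "nat \<Rightarrow> real" and f :: "real \<Rightarrow> real"
  assumes a0: "a 0 = 1"
    and incr: "\<And>i j. j \<le> N \<Longrightarrow> i < j \<Longrightarrow> a i < a j"
    and ck: "Ck k f" and km: "m_a N a \<le> k"
    and eq: "\<And>x. f x + (\<Sum>i=1..N. f (a i * x)) = 0"
  shows "f x = 0"
proof -
  define m where "m = m_a N a"
  define D where "D j = (deriv ^^ j) f" for j
  have pos: "\<And>i. i \<le> N \<Longrightarrow> 0 < a i" using scales_pos[where N = N and a = a, OF a0 incr] .
  have eq_full: "(\<Sum>i\<le>N. 1 * f (a i * x)) = 0" for x
    using eq[of x] a0 by (simp add: atMost_atLeast0 sum.atLeast_Suc_atMost)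
  have eq_D: "(\<Sum>i\<le>N. a i ^ j * D j (a i * x)) = 0" if "j \<le> k" for j x
    using Ck_scaled_sum_equation[OF ck eq_full that] by (simp add: D_def)
  have D_zero: "D j 0 = 0" if "j \<le> k" for j
  proof -
    have "(\<Sum>i\<le>N. a i ^ j) * D j 0 = 0"
      using eq_D[OF that, of 0] by (simp add: sum_distrib_right)
    moreover have "0 < (\<Sum>i\<le>N. a i ^ j)"
      using pos by (intro sum_pos) auto
    ultimately show ?thesis by simp
  qed
  have D_m_cont: "continuous_on UNIV (D m)"
    using Ck_continuous[OF ck] km by (simp add: D_def m_def)
  have ratio: "0 < a i / a N" "a i / a N < 1" if "i < N" for i
    using pos[of i] pos[of N] incr[of N i] that by auto
  have ratio_sum: "(\<Sum>i<N. (a i / a N) ^ m) < 1"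
    unfolding m_def using pos[of N] ratio by (intro m_a_property) (simp add: field_simps)
  have D_m_bound: "\<bar>D m y\<bar> \<le> (\<Sum>i<N. (a i / a N) ^ m * \<bar>D m ((a i / a N) * y)\<bar>)" for y
    using isolate_top_scale[OF pos eq_D] km by (simp add: m_def)
  have D_m: "D m y = 0" for y
  proof (rule contraction_vanishes[OF D_m_cont _ ratio_sum _ D_m_bound])
    show "0 \<le> (a i / a N) ^ m" if "i \<in> {..<N}" for i
      using ratio[of i] that by simp
    show "\<bar>a i / a N\<bar> \<le> 1" if "i \<in> {..<N}" for i
      using ratio[of i] that by simp
  qed
  have D_der: "(D j has_real_derivative D (Suc j) t) (at t)" if "j < m" for j t
    using Ck_has_derivative[OF ck] that km by (simp add: D_def m_def)
  show ?thesis
  proof (rule vanishing_derivatives_imp_zero[of m f, OF D_der[unfolded D_def] D_m[unfolded D_def]])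
    show "(deriv ^^ j) f 0 = 0" if "j \<le> m" for j
      using D_zero[of j] that km by (simp add: D_def m_def)
  qed
qed

theorem mainTheorem2:
  fixes N :: nat and a :: "nat \<Rightarrow> real"
  assumes "N \<ge> 1"
    and "a 0 = 1"
    and "1 < a 1"
    and "\<And>i. 1 \<le> i \<Longrightarrow> i < N \<Longrightarrow> a i < a (Suc i)"
  shows "(\<forall>k f. Ck k f \<and> k \<ge> m_a N a \<and> (\<forall>x. f x + (\<Sum>i=1..N. f (a i * x)) = 0)
              \<longrightarrow> (\<forall>x. f x = 0))
       \<and> (\<forall>f. (\<forall>k. Ck k f) \<and> (\<forall>x. f x + (\<Sum>i=1..N. f (a i * x)) = 0)
              \<longrightarrow> (\<forall>x. f x = 0))"
proof -
  have incr: "\<And>i j. j \<le> N \<Longrightarrow> i < j \<Longrightarrow> a i < a j"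
    using scales_increasing[where a = a and N = N, OF assms(2-4)] by blast
  note vanish = Ck_solution_vanishes[where N = N and a = a, OF assms(2) incr]
  show ?thesis
    using vanish by blast
qed

end
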